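(* Let $f^*$ be any maximum flow in $\mathcal{H}$. Let $V_1\subseteq V$ be nonempty with $\rho_h(V_1)=\rho_h^*$, and let $\Lambda_1=\{\lambda\in\Lambda:\lambda\subseteq V_1\}$. Then for every non-trivial component $C$ of $\mathcal{H}_{f^*}$, either $C\subseteq V_1\cup\Lambda_1$ or $C\cap(V_1\cup\Lambda_1)=\emptyset$.
   Context: Let $G=(V,E)$ be a finite simple undirected graph and $h\ge2$. An $h$-clique is a set of $h$ pairwise adjacent nodes; $\mu_h(G[W])$ counts $h$-cliques inside $W$; for nonempty $W$, $\rho_h(W)=\mu_h(G[W])/|W|$; $\rho_h^*=\max_{\emptyset\ne W\subseteq V}\rho_h(W)$; $deg_G(v,h)$ is the number of $h$-cliques containing $v$; $\Lambda$ is the set of $(h-1)$-cliques of $G$ contained in some $h$-clique. Flow network $\mathcal{H}=(V_\mathcal{H},E_\mathcal{H},c)$: $V_\mathcal{H}=V\cup\Lambda\cup\{s,t\}$; for $v\in V$: arcs $(s,v)$ cap. $deg_G(v,h)$, $(v,t)$ cap. $h\rho_h^*$, $(v,s),(t,v)$ cap. $0$; for $\lambda\in\Lambda$, $v\in\lambda$: $(\lambda,v)$ cap. $+\infty$, $(v,\lambda)$ cap. $0$; for $\lambda\in\Lambda$, $v\in V$ with $\lambda\cup\{v\}$ an $h$-clique: $(v,\lambda)$ cap. $1$, $(\lambda,v)$ cap. $0$; no other arcs. A flow $f$ satisfies $f(u,v)\le c(u,v)$, $f(v,u)=-f(u,v)$, conservation at nodes other than $s,t$; value $\sum_v f(s,v)$.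 The residual graph $\mathcal{H}_{f}$ has an arc $(u,v)$ whenever $(u,v)\in E_\mathcal{H}$ and $c(u,v)-f(u,v)>0$. A non-trivial component is a strongly connected component of $\mathcal{H}_{f^*}$ containing neither $s$ nor $t$. *)

theory Defs
  imports Complex_Main "HOL-Library.Extended_Real"
begin

(* Simple undirected graph G = (V,E): V finite vertex set, E a set of 2-element subsets of V. *)

definition is_clique :: "'a set set \<Rightarrow> 'a set \<Rightarrow> bool" where
  "is_clique E K \<longleftrightarrow> (\<forall>u\<in>K. \<forall>v\<in>K. u \<noteq> v \<longrightarrow> {u, v} \<in> E)"

definition hcliques :: "'a set \<Rightarrow> 'a set set \<Rightarrow> nat \<Rightarrow> 'a set set" where
  "hcliques V E h = {K. K \<subseteq> V \<and> card K = h \<and> is_clique E K}"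

definition mu :: "'a set \<Rightarrow> 'a set set \<Rightarrow> nat \<Rightarrow> 'a set \<Rightarrow> nat" where
  "mu V E h W = card {K \<in> hcliques V E h. K \<subseteq> W}"

definition rho :: "'a set \<Rightarrow> 'a set set \<Rightarrow> nat \<Rightarrow> 'a set \<Rightarrow> real" where
  "rho V E h W = real (mu V E h W) / real (card W)"

definition rho_star :: "'a set \<Rightarrow> 'a set set \<Rightarrow> nat \<Rightarrow> real" where
  "rho_star V E h = Max {rho V E h W | W. W \<subseteq> V \<and> W \<noteq> {}}"

definition cdeg :: "'a set \<Rightarrow> 'a set set \<Rightarrow> nat \<Rightarrow> 'a \<Rightarrow> nat" where
  "cdeg V E h v = card {K \<in> hcliques V E h. v \<in> K}"

definition Lam :: "'a set \<Rightarrow> 'a set set \<Rightarrow> nat \<Rightarrow> 'a set set" where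
  "Lam V E h = {l \<in> hcliques V E (h - 1). \<exists>K \<in> hcliques V E h. l \<subseteq> K}"

datatype 'a hnode = Src | Snk | VN 'a | LN "'a set"

definition nodesH :: "'a set \<Rightarrow> 'a set set \<Rightarrow> nat \<Rightarrow> 'a hnode set" where
  "nodesH V E h = {Src, Snk} \<union> VN ` V \<union> LN ` Lam V E h"

(* the arc set E_H (including the zero-capacity reverse arcs) *)
fun arcH :: "'a set \<Rightarrow> 'a set set \<Rightarrow> nat \<Rightarrow> 'a hnode \<Rightarrow> 'a hnode \<Rightarrow> bool" where
  "arcH V E h Src (VN v) = (v \<in> V)"
| "arcH V E h (VN v) Src = (v \<in> V)"
| "arcH V E h (VN v) Snk = (v \<in> V)"
| "arcH V E h Snk (VN v) = (v \<in> V)"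
| "arcH V E h (LN l) (VN v) =
     (l \<in> Lam V E h \<and> v \<in> V \<and> (v \<in> l \<or> insert v l \<in> hcliques V E h))"
| "arcH V E h (VN v) (LN l) =
     (l \<in> Lam V E h \<and> v \<in> V \<and> (v \<in> l \<or> insert v l \<in> hcliques V E h))"
| "arcH V E h _ _ = False"

fun capH :: "'a set \<Rightarrow> 'a set set \<Rightarrow> nat \<Rightarrow> 'a hnode \<Rightarrow> 'a hnode \<Rightarrow> ereal" where
  "capH V E h Src (VN v) = (if v \<in> V then ereal (real (cdeg V E h v)) else 0)"
| "capH V E h (VN v) Snk = (if v \<in> V then ereal (real h * rho_star V E h) else 0)"
| "capH V E h (LN l) (VN v) = (if l \<in> Lam V E h \<and> v \<in> l then \<infinity> else 0)"
| "capH V E h (VN v) (LN l) =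
     (if l \<in> Lam V E h \<and> v \<in> V \<and> insert v l \<in> hcliques V E h then 1 else 0)"
| "capH V E h _ _ = 0"

definition is_flowH :: "'a set \<Rightarrow> 'a set set \<Rightarrow> nat \<Rightarrow> ('a hnode \<Rightarrow> 'a hnode \<Rightarrow> real) \<Rightarrow> bool" where
  "is_flowH V E h f \<longleftrightarrow>
     (\<forall>u\<in>nodesH V E h. \<forall>v\<in>nodesH V E h.
        ereal (f u v) \<le> capH V E h u v \<and> f v u = - f u v) \<and>
     (\<forall>x\<in>nodesH V E h - {Src, Snk}. (\<Sum>y\<in>nodesH V E h. f x y) = 0)"

definition flow_value :: "'a set \<Rightarrow> 'a set set \<Rightarrow> nat \<Rightarrow> ('a hnode \<Rightarrow> 'a hnode \<Rightarrow> real) \<Rightarrow> real" where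
  "flow_value V E h f = (\<Sum>v\<in>nodesH V E h. f Src v)"

definition is_max_flowH :: "'a set \<Rightarrow> 'a set set \<Rightarrow> nat \<Rightarrow> ('a hnode \<Rightarrow> 'a hnode \<Rightarrow> real) \<Rightarrow> bool" where
  "is_max_flowH V E h f \<longleftrightarrow> is_flowH V E h f \<and>
     (\<forall>g. is_flowH V E h g \<longrightarrow> flow_value V E h g \<le> flow_value V E h f)"

definition residH :: "'a set \<Rightarrow> 'a set set \<Rightarrow> nat \<Rightarrow> ('a hnode \<Rightarrow> 'a hnode \<Rightarrow> real) \<Rightarrow> ('a hnode \<times> 'a hnode) set" where
  "residH V E h f = {(u, v). arcH V E h u v \<and> ereal (f u v) < capH V E h u v}"

definition is_sccH :: "'a set \<Rightarrow> 'a set set \<Rightarrow> nat \<Rightarrow> ('a hnode \<Rightarrow> 'a hnode \<Rightarrow> real) \<Rightarrow> 'a hnode set \<Rightarrow> bool" where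
  "is_sccH V E h f C \<longleftrightarrow> (\<exists>x\<in>nodesH V E h.
     C = {y \<in> nodesH V E h. (x, y) \<in> (residH V E h f)\<^sup>* \<and> (y, x) \<in> (residH V E h f)\<^sup>*})"

end

theory Submission
  imports Defs
begin

text \<open>Let R be the set of nodes reachable from the source in the residual graph of the maximum
  flow. No residual arc leaves R, so R is a minimum cut and its capacity is the flow value. Any cut
  {Src} \<union> A \<union> L with L closed under the infinite arcs (every l in L lies in A) has capacity at least
  h times the number of h-cliques: each clique not inside A contributes h cut arcs, and the arcs into
  the sink contribute h rho* |A| \<ge> h mu(A). For the cut S = {Src} \<union> V1 \<union> Lambda1 of a densest set both
  estimates are equalities, so S is a minimum cut too. Hence the maximum flow saturates every arc
  leaving S, no residual arc leaves S, and a strongly connected component meeting S lies inside S.\<close>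

section \<open>Flows, cuts and residual graphs\<close>

lemma finite_hcliques: "finite V \<Longrightarrow> finite (hcliques V E h)"
  by (rule finite_subset[of _ "Pow V"]) (auto simp: hcliques_def)

lemma Lam_subset: "l \<in> Lam V E h \<Longrightarrow> l \<subseteq> V"
  by (auto simp: Lam_def hcliques_def)

lemma finite_Lam: "finite V \<Longrightarrow> finite (Lam V E h)"
  by (rule finite_subset[of _ "Pow V"]) (auto dest: Lam_subset)

lemma finite_nodesH: "finite V \<Longrightarrow> finite (nodesH V E h)"
  by (simp add: nodesH_def finite_Lam)

lemma arcH_commute: "arcH V E h u v = arcH V E h v u"
  by (cases u; cases v) auto

lemma capH_eq_0_if_not_arcH:
  "u \<in> nodesH V E h \<Longrightarrow> v \<in> nodesH V E h \<Longrightarrow> \<not> arcH V E h u v \<Longrightarrow> capH V E h u v = 0"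
  by (cases u; cases v) (auto simp: nodesH_def dest: Lam_subset)

lemma residH_subset_nodesH: "residH V E h f \<subseteq> nodesH V E h \<times> nodesH V E h"
proof
  fix p assume "p \<in> residH V E h f"
  then show "p \<in> nodesH V E h \<times> nodesH V E h"
    by (cases p, rename_tac u v, case_tac u; case_tac v) (auto simp: residH_def nodesH_def)
qed

lemma is_flowH_capacity:
  "is_flowH V E h f \<Longrightarrow> u \<in> nodesH V E h \<Longrightarrow> v \<in> nodesH V E h \<Longrightarrow> ereal (f u v) \<le> capH V E h u v"
  unfolding is_flowH_def by blast

lemma is_flowH_skew:
  "is_flowH V E h f \<Longrightarrow> u \<in> nodesH V E h \<Longrightarrow> v \<in> nodesH V E h \<Longrightarrow> f v u = - f u v"
  unfolding is_flowH_def by blast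

lemma is_flowH_conservation:
  "is_flowH V E h f \<Longrightarrow> x \<in> nodesH V E h - {Src, Snk} \<Longrightarrow> (\<Sum>y\<in>nodesH V E h. f x y) = 0"
  unfolding is_flowH_def by blast

lemma saturated_if_not_residH:
  assumes fl: "is_flowH V E h f" and u: "u \<in> nodesH V E h" and v: "v \<in> nodesH V E h"
    and not_res: "(u, v) \<notin> residH V E h f"
  shows "ereal (f u v) = capH V E h u v"
proof (cases "arcH V E h u v")
  case True
  with not_res is_flowH_capacity[OF fl u v] show ?thesis
    by (simp add: residH_def)
next
  case False
  then have "capH V E h u v = 0" "capH V E h v u = 0"
    using capH_eq_0_if_not_arcH[OF u v] capH_eq_0_if_not_arcH[OF v u] by (auto simp: arcH_commute)
  moreover have "f v u = - f u v" using is_flowH_skew[OF fl u v] .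
  ultimately show ?thesis
    using is_flowH_capacity[OF fl u v] is_flowH_capacity[OF fl v u] by (simp add: zero_ereal_def)
qed

lemma sum_sum_skew_eq_0:
  fixes f :: "'b \<Rightarrow> 'b \<Rightarrow> real"
  assumes "\<And>u v. u \<in> T \<Longrightarrow> v \<in> T \<Longrightarrow> f v u = - f u v"
  shows "(\<Sum>u\<in>T. \<Sum>v\<in>T. f u v) = 0"
proof -
  have "(\<Sum>u\<in>T. \<Sum>v\<in>T. f u v) = (\<Sum>v\<in>T. \<Sum>u\<in>T. - f v u)"
    by (subst sum.swap) (intro sum.cong refl assms)
  then show ?thesis by (simp add: sum_negf)
qed

lemma flow_value_eq_net_flow_across_cut:
  assumes fl: "is_flowH V E h f" and fin: "finite V"
    and T: "T \<subseteq> nodesH V E h" "Src \<in> T" "Snk \<notin> T"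
  shows "flow_value V E h f = (\<Sum>u\<in>T. \<Sum>v\<in>nodesH V E h - T. f u v)"
proof -
  let ?N = "nodesH V E h"
  have finN: "finite ?N" using fin by (rule finite_nodesH)
  have "(\<Sum>u\<in>T. \<Sum>v\<in>?N. f u v) = (\<Sum>u\<in>T. if u = Src then (\<Sum>v\<in>?N. f Src v) else 0)"
    using T by (intro sum.cong) (auto intro: is_flowH_conservation[OF fl])
  also have "\<dots> = flow_value V E h f"
    using T finite_subset[OF T(1) finN] by (simp add: flow_value_def)
  finally have "flow_value V E h f = (\<Sum>u\<in>T. \<Sum>v\<in>?N - T. f u v) + (\<Sum>u\<in>T. \<Sum>v\<in>T. f u v)"
    using T(1) finN by (simp add: sum.subset_diff[of T ?N] sum.distrib)
  moreover have "(\<Sum>u\<in>T. \<Sum>v\<in>T. f u v) = 0"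
    using T(1) by (intro sum_sum_skew_eq_0) (auto intro: is_flowH_skew[OF fl])
  ultimately show ?thesis by simp
qed

lemma rtrancl_imp_unit_walk_flow:
  assumes "(a, b) \<in> r\<^sup>*" and "r \<subseteq> N \<times> N" and "finite N"
  shows "\<exists>w :: 'n \<Rightarrow> 'n \<Rightarrow> nat. (\<forall>u v. 0 < w u v \<longrightarrow> (u, v) \<in> r) \<and>
     (\<forall>x\<in>N. (\<Sum>y\<in>N. real (w x y) - real (w y x)) = of_bool (x = a) - of_bool (x = b))"
  using assms(1)
proof (induction rule: rtrancl_induct)
  case base
  show ?case by (rule exI[of _ "\<lambda>_ _. 0"]) simp
next
  case (step y z)
  then obtain w where w_r: "\<forall>u v. 0 < w u v \<longrightarrow> (u, v) \<in> r"
    and w_excess: "\<forall>x\<in>N. (\<Sum>y'\<in>N. real (w x y') - real (w y' x)) = of_bool (x = a) - of_bool (x = y)"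
    by blast
  have yz: "y \<in> N" "z \<in> N" using step.hyps(2) assms(2) by auto
  define w' where "w' u v = w u v + of_bool (u = y \<and> v = z)" for u v
  have "(\<Sum>y'\<in>N. real (w' x y') - real (w' y' x)) = of_bool (x = a) - of_bool (x = z)"
    if x: "x \<in> N" for x
  proof -
    have "(\<Sum>y'\<in>N. real (w' x y') - real (w' y' x))
        = (\<Sum>y'\<in>N. real (w x y') - real (w y' x))
          + ((\<Sum>y'\<in>N. of_bool (x = y \<and> y' = z)) - (\<Sum>y'\<in>N. of_bool (y' = y \<and> x = z)))"
      by (simp add: w'_def sum.distrib sum_subtractf algebra_simps)
    also have "\<dots> = of_bool (x = a) - of_bool (x = z)"
      using yz x w_excess assms(3) by (simp add: of_bool_conj sum.If_cases)
    finally show ?thesis .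
  qed
  moreover have "\<forall>u v. 0 < w' u v \<longrightarrow> (u, v) \<in> r"
    using w_r step.hyps(2) by (auto simp: w'_def)
  ultimately show ?case by blast
qed

lemma ereal_slack_finite:
  fixes a k :: "'p \<Rightarrow> real" and c :: "'p \<Rightarrow> ereal"
  assumes "finite P" and "\<forall>p\<in>P. ereal (a p) < c p"
  shows "\<exists>\<epsilon>>0. \<forall>p\<in>P. ereal (a p + \<epsilon> * k p) \<le> c p"
proof -
  have "eventually (\<lambda>\<epsilon>. ereal (a p + \<epsilon> * k p) < c p) (at_right 0)" if "p \<in> P" for p
  proof -
    have "((\<lambda>\<epsilon>. a p + \<epsilon> * k p) \<longlongrightarrow> a p + 0 * k p) (at_right 0)"
      by (intro tendsto_intros)
    then have "((\<lambda>\<epsilon>. ereal (a p + \<epsilon> * k p)) \<longlongrightarrow> ereal (a p)) (at_right 0)"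
      by (simp add: lim_ereal)
    then show ?thesis using assms(2) that by (auto intro: order_tendstoD)
  qed
  then have "eventually (\<lambda>\<epsilon>. \<forall>p\<in>P. ereal (a p + \<epsilon> * k p) < c p) (at_right 0)"
    using assms(1) by (simp add: eventually_ball_finite)
  then obtain b :: real where "b > 0" and b: "\<And>\<epsilon>. 0 < \<epsilon> \<Longrightarrow> \<epsilon> < b \<Longrightarrow> \<forall>p\<in>P. ereal (a p + \<epsilon> * k p) < c p"
    by (auto simp: eventually_at_right_field)
  then have "\<forall>p\<in>P. ereal (a p + b / 2 * k p) < c p" by (intro b) auto
  then show ?thesis using \<open>b > 0\<close> by (intro exI[of _ "b / 2"]) (auto intro: less_imp_le)
qed

lemma flow_augmentable_along_unit_walk_flow:
  fixes w :: "'a hnode \<Rightarrow> 'a hnode \<Rightarrow> nat"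
  assumes fl: "is_flowH V E h f" and fin: "finite V"
    and w_resid: "\<forall>u v. 0 < w u v \<longrightarrow> (u, v) \<in> residH V E h f"
    and w_excess: "\<forall>x\<in>nodesH V E h.
      (\<Sum>y\<in>nodesH V E h. real (w x y) - real (w y x)) = of_bool (x = Src) - of_bool (x = Snk)"
  shows "\<exists>g. is_flowH V E h g \<and> flow_value V E h f < flow_value V E h g"
proof -
  let ?N = "nodesH V E h"
  define P where "P = {(u, v) \<in> ?N \<times> ?N. 0 < w u v}"
  have "finite P"
    using finite_nodesH[OF fin] by (auto simp: P_def intro: finite_subset[of _ "?N \<times> ?N"])
  moreover have "\<forall>(u, v)\<in>P. ereal (f u v) < capH V E h u v"
    using w_resid by (auto simp: P_def residH_def)
  ultimately obtain \<epsilon> where "\<epsilon> > 0"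
    and \<epsilon>: "\<forall>(u, v)\<in>P. ereal (f u v + \<epsilon> * real (w u v)) \<le> capH V E h u v"
    using ereal_slack_finite[where P = P and a = "case_prod f" and c = "case_prod (capH V E h)"
        and k = "case_prod (\<lambda>u v. real (w u v))"] by (auto simp: case_prod_beta)
  define g where "g u v = f u v + \<epsilon> * (real (w u v) - real (w v u))" for u v
  have "ereal (g u v) \<le> capH V E h u v" if u: "u \<in> ?N" and v: "v \<in> ?N" for u v
  proof -
    have "ereal (g u v) \<le> ereal (f u v + \<epsilon> * real (w u v))"
      using \<open>\<epsilon> > 0\<close> by (simp add: g_def algebra_simps)
    also have "\<dots> \<le> capH V E h u v"
      using \<epsilon> is_flowH_capacity[OF fl u v] u v by (cases "w u v = 0") (auto simp: P_def)
    finally show ?thesis .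
  qed
  moreover have "g v u = - g u v" if "u \<in> ?N" "v \<in> ?N" for u v
    using is_flowH_skew[OF fl that] by (simp add: g_def algebra_simps)
  moreover have "(\<Sum>y\<in>?N. g x y) = 0" if x: "x \<in> ?N - {Src, Snk}" for x
    using is_flowH_conservation[OF fl x] w_excess x
    by (simp add: g_def sum.distrib sum_distrib_left[symmetric])
  ultimately have "is_flowH V E h g" unfolding is_flowH_def by blast
  moreover have "(\<Sum>y\<in>?N. real (w Src y) - real (w y Src)) = 1"
    using w_excess by (simp add: nodesH_def)
  then have "flow_value V E h g = flow_value V E h f + \<epsilon>"
    by (simp add: flow_value_def g_def sum.distrib sum_distrib_left[symmetric])
  ultimately show ?thesis using \<open>\<epsilon> > 0\<close> by auto
qed

lemma max_flow_no_augmenting_path: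
  assumes fin: "finite V" and max: "is_max_flowH V E h f"
  shows "(Src, Snk) \<notin> (residH V E h f)\<^sup>*"
proof
  assume "(Src, Snk) \<in> (residH V E h f)\<^sup>*"
  then obtain w where "\<forall>u v. 0 < w u v \<longrightarrow> (u, v) \<in> residH V E h f"
    "\<forall>x\<in>nodesH V E h. (\<Sum>y\<in>nodesH V E h. real (w x y) - real (w y x))
       = of_bool (x = Src) - of_bool (x = Snk)"
    using rtrancl_imp_unit_walk_flow[OF _ residH_subset_nodesH finite_nodesH[OF fin]] by blast
  moreover have "is_flowH V E h f" using max by (simp add: is_max_flowH_def)
  ultimately obtain g where "is_flowH V E h g" "flow_value V E h f < flow_value V E h g"
    using flow_augmentable_along_unit_walk_flow[OF _ fin] by blast
  with max show False by (auto simp: is_max_flowH_def not_less[symmetric])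
qed

text \<open>Since real_of_ereal maps \<infinity> to 0, cut_cap is the true capacity only for cuts left by
  finite arcs alone; the cuts used below are of this kind.\<close>
definition cut_cap :: "'a set \<Rightarrow> 'a set set \<Rightarrow> nat \<Rightarrow> 'a hnode set \<Rightarrow> real" where
  "cut_cap V E h T = (\<Sum>u\<in>T. \<Sum>v\<in>nodesH V E h - T. real_of_ereal (capH V E h u v))"

lemma flow_value_eq_cut_cap_if_residual_closed:
  assumes fl: "is_flowH V E h f" and fin: "finite V"
    and T: "T \<subseteq> nodesH V E h" "Src \<in> T" "Snk \<notin> T"
    and closed: "residH V E h f `` T \<subseteq> T"
  shows "flow_value V E h f = cut_cap V E h T"
proof -
  have "f u v = real_of_ereal (capH V E h u v)" if "u \<in> T" "v \<in> nodesH V E h - T" for u v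
  proof -
    have "(u, v) \<notin> residH V E h f" using closed that by blast
    then have "ereal (f u v) = capH V E h u v"
      using that T(1) by (intro saturated_if_not_residH[OF fl]) auto
    then show ?thesis by (metis real_of_ereal.simps(1))
  qed
  then show ?thesis
    unfolding flow_value_eq_net_flow_across_cut[OF fl fin T] cut_cap_def by simp
qed

lemma flow_le_cut_cap_across_finite_arcs:
  assumes fl: "is_flowH V E h f" and T: "T \<subseteq> nodesH V E h"
    and finite_arcs: "\<forall>u\<in>T. \<forall>v\<in>nodesH V E h - T. capH V E h u v \<noteq> \<infinity>"
    and "u \<in> T" "v \<in> nodesH V E h - T"
  shows "f u v \<le> real_of_ereal (capH V E h u v)"
proof -
  have "ereal (f u v) \<le> capH V E h u v"
    using assms by (intro is_flowH_capacity[OF fl]) auto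
  moreover have "capH V E h u v \<noteq> \<infinity>" using finite_arcs assms(4,5) by blast
  ultimately show ?thesis by (cases "capH V E h u v") auto
qed

lemma residual_closed_if_cut_cap_le_flow_value:
  assumes fl: "is_flowH V E h f" and fin: "finite V"
    and T: "T \<subseteq> nodesH V E h" "Src \<in> T" "Snk \<notin> T"
    and finite_arcs: "\<forall>u\<in>T. \<forall>v\<in>nodesH V E h - T. capH V E h u v \<noteq> \<infinity>"
    and tight: "cut_cap V E h T \<le> flow_value V E h f"
  shows "residH V E h f `` T \<subseteq> T"
proof
  let ?N = "nodesH V E h" and ?slack = "\<lambda>u v. real_of_ereal (capH V E h u v) - f u v"
  fix v assume "v \<in> residH V E h f `` T"
  then obtain u where u: "u \<in> T" and uv: "(u, v) \<in> residH V E h f" by blast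
  show "v \<in> T"
  proof (rule ccontr)
    assume "v \<notin> T"
    then have v: "v \<in> ?N - T" using residH_subset_nodesH uv by blast
    have finN: "finite ?N" using fin by (rule finite_nodesH)
    have slack_nonneg: "\<forall>u\<in>T. \<forall>v\<in>?N - T. 0 \<le> ?slack u v"
      using flow_le_cut_cap_across_finite_arcs[OF fl T(1) finite_arcs] by simp
    have "(\<Sum>u'\<in>T. \<Sum>v'\<in>?N - T. ?slack u' v') = 0"
    proof (rule antisym)
      show "(\<Sum>u\<in>T. \<Sum>v\<in>?N - T. ?slack u v) \<le> 0"
        using tight unfolding flow_value_eq_net_flow_across_cut[OF fl fin T] cut_cap_def
        by (simp add: sum_subtractf)
    qed (use slack_nonneg in \<open>auto intro!: sum_nonneg\<close>)
    then have "(\<Sum>v'\<in>?N - T. ?slack u v') = 0"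
      by (subst (asm) sum_nonneg_eq_0_iff[OF finite_subset[OF T(1) finN]])
        (use slack_nonneg u in \<open>auto intro: sum_nonneg\<close>)
    then have "?slack u v = 0"
      by (subst (asm) sum_nonneg_eq_0_iff) (use finN slack_nonneg u v in auto)
    moreover have "ereal (f u v) \<le> capH V E h u v"
      using u v T(1) by (intro is_flowH_capacity[OF fl]) auto
    ultimately have "ereal (f u v) = capH V E h u v"
      using finite_arcs u v by (cases "capH V E h u v") auto
    then show False using uv by (simp add: residH_def)
  qed
qed

section \<open>Cuts of the clique network\<close>

definition cut_nodes :: "'a set \<Rightarrow> 'a set set \<Rightarrow> 'a hnode set" where
  "cut_nodes A L = {Src} \<union> VN ` A \<union> LN ` L"

lemma residual_closed_cut_eq_cut_nodes:
  assumes fl: "is_flowH V E h f"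
    and T: "T \<subseteq> nodesH V E h" "Src \<in> T" "Snk \<notin> T"
    and closed: "residH V E h f `` T \<subseteq> T"
  obtains A L where "A \<subseteq> V" "L \<subseteq> Lam V E h" "\<forall>l\<in>L. l \<subseteq> A" "T = cut_nodes A L"
proof
  define A where "A = {x \<in> V. VN x \<in> T}"
  define L where "L = {l \<in> Lam V E h. LN l \<in> T}"
  show "A \<subseteq> V" "L \<subseteq> Lam V E h" by (auto simp: A_def L_def)
  show "T = cut_nodes A L"
    using T by (auto simp: cut_nodes_def nodesH_def A_def L_def)
  show "\<forall>l\<in>L. l \<subseteq> A"
  proof (intro ballI subsetI)
    fix l x assume l: "l \<in> L" and x: "x \<in> l"
    then have "x \<in> V" by (auto simp: L_def dest: Lam_subset)
    \<comment> \<open>arcs from a lambda node to its own vertices have infinite capacity, so they stay residual\<close>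
    with l x have "(LN l, VN x) \<in> residH V E h f" by (simp add: residH_def L_def)
    with l closed have "VN x \<in> T" by (auto simp: L_def)
    with \<open>x \<in> V\<close> show "x \<in> A" by (simp add: A_def)
  qed
qed

lemma capH_leaving_cut_nodes_finite:
  assumes "\<forall>l\<in>L. l \<subseteq> A"
  shows "\<forall>u\<in>cut_nodes A L. \<forall>v\<in>nodesH V E h - cut_nodes A L. capH V E h u v \<noteq> \<infinity>"
proof (intro ballI)
  fix u v assume "u \<in> cut_nodes A L" "v \<in> nodesH V E h - cut_nodes A L"
  with assms show "capH V E h u v \<noteq> \<infinity>"
    by (cases u; cases v) (auto simp: cut_nodes_def)
qed

lemma sum_hnodes_split:
  assumes "finite A" "finite L" "a \<in> {Src, Snk}"
  shows "(\<Sum>u\<in>{a} \<union> VN ` A \<union> LN ` L. F u) = F a + (\<Sum>x\<in>A. F (VN x)) + (\<Sum>l\<in>L. F (LN l))"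
proof -
  have "(\<Sum>u\<in>{a} \<union> VN ` A \<union> LN ` L. F u) = F a + sum F (VN ` A) + sum F (LN ` L)"
    using assms by (subst sum.union_disjoint) (auto simp: image_iff)
  then show ?thesis by (simp add: sum.reindex inj_on_def)
qed

lemma cut_cap_cut_nodes_eq_sum_arcs:
  assumes fin: "finite V" and AV: "A \<subseteq> V" and LL: "L \<subseteq> Lam V E h"
  shows "cut_cap V E h (cut_nodes A L) =
    (\<Sum>x\<in>V - A. real (cdeg V E h x))
    + (\<Sum>x\<in>A. real (card {l \<in> Lam V E h - L. insert x l \<in> hcliques V E h}))
    + real h * rho_star V E h * real (card A)"
proof -
  let ?c = "\<lambda>u v. real_of_ereal (capH V E h u v)" and ?\<Lambda> = "Lam V E h"
  have finA: "finite A" and finL: "finite ?\<Lambda>" using fin AV finite_subset finite_Lam by auto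
  have rest: "nodesH V E h - cut_nodes A L = {Snk} \<union> VN ` (V - A) \<union> LN ` (?\<Lambda> - L)"
    using AV LL by (auto simp: nodesH_def cut_nodes_def)
  have "(\<Sum>v\<in>nodesH V E h - cut_nodes A L. ?c (VN x) v)
      = real h * rho_star V E h + real (card {l \<in> ?\<Lambda> - L. insert x l \<in> hcliques V E h})"
    if "x \<in> A" for x
  proof -
    have "x \<in> V" using that AV by auto
    have "(\<Sum>l\<in>?\<Lambda> - L. ?c (VN x) (LN l)) = (\<Sum>l\<in>?\<Lambda> - L. of_bool (insert x l \<in> hcliques V E h))"
      using \<open>x \<in> V\<close> by (intro sum.cong) auto
    also have "\<dots> = real (card {l \<in> ?\<Lambda> - L. insert x l \<in> hcliques V E h})"
      using finL by (simp add: of_bool_def sum.inter_filter[symmetric])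
    finally show ?thesis
      unfolding rest using fin finL \<open>x \<in> V\<close> by (subst sum_hnodes_split) auto
  qed
  moreover have "(\<Sum>v\<in>nodesH V E h - cut_nodes A L. ?c (LN l) v) = 0" for l
    unfolding rest using fin finL by (subst sum_hnodes_split) (auto intro!: sum.neutral)
  moreover have "(\<Sum>v\<in>nodesH V E h - cut_nodes A L. ?c Src v) = (\<Sum>x\<in>V - A. real (cdeg V E h x))"
    unfolding rest using fin finL by (subst sum_hnodes_split) auto
  ultimately show ?thesis
    unfolding cut_cap_def cut_nodes_def using finA finite_subset[OF LL finL]
    by (subst sum_hnodes_split) (auto simp: sum.distrib algebra_simps)
qed

section \<open>Counting cut arcs clique by clique\<close>

lemma finite_hclique: "0 < h \<Longrightarrow> K \<in> hcliques V E h \<Longrightarrow> finite K"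
  by (auto simp: hcliques_def intro: card_ge_0_finite)

lemma card_Int_add_card_Diff_hclique:
  "0 < h \<Longrightarrow> K \<in> hcliques V E h \<Longrightarrow> card (K \<inter> A) + card (K - A) = h"
  using card_Int_Diff[OF finite_hclique, of h K V E A] by (simp add: hcliques_def)

lemma Diff_singleton_in_Lam:
  assumes "0 < h" and K: "K \<in> hcliques V E h" and "x \<in> K"
  shows "K - {x} \<in> Lam V E h"
proof -
  have "card (K - {x}) = h - 1"
    using assms finite_hclique[OF assms(1) K] by (simp add: hcliques_def)
  then show ?thesis using K by (auto simp: Lam_def hcliques_def is_clique_def)
qed

lemma card_Lam_extensions:
  assumes "0 < h"
  shows "card {l \<in> Lam V E h - L. insert x l \<in> hcliques V E h}
       = card {K \<in> hcliques V E h. x \<in> K \<and> K - {x} \<notin> L}"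
proof -
  let ?X = "{l \<in> Lam V E h - L. insert x l \<in> hcliques V E h}"
  have x_notin: "x \<notin> l" if "l \<in> ?X" for l
    using that assms by (auto simp: Lam_def hcliques_def insert_absorb)
  have "{K \<in> hcliques V E h. x \<in> K \<and> K - {x} \<notin> L} = insert x ` ?X"
  proof (intro equalityI subsetI)
    fix K assume K: "K \<in> {K \<in> hcliques V E h. x \<in> K \<and> K - {x} \<notin> L}"
    then have "K - {x} \<in> ?X" using Diff_singleton_in_Lam[OF assms] by (auto simp: insert_absorb)
    moreover have "K = insert x (K - {x})" using K by auto
    ultimately show "K \<in> insert x ` ?X" by (rule rev_image_eqI)
  next
    fix K assume "K \<in> insert x ` ?X"
    then obtain l where l: "l \<in> ?X" and K: "K = insert x l" by blast
    then have "K - {x} = l" using x_notin by auto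
    then show "K \<in> {K \<in> hcliques V E h. x \<in> K \<and> K - {x} \<notin> L}" using l K by auto
  qed
  moreover have "inj_on (insert x) ?X"
  proof (rule inj_onI)
    fix a b assume "a \<in> ?X" "b \<in> ?X" "insert x a = insert x b"
    then show "a = b" using x_notin Diff_insert_absorb by metis
  qed
  ultimately show ?thesis by (simp add: card_image)
qed

text \<open>The arcs of the cut cut_nodes A L charged to the h-clique K: the source arcs of its vertices
  outside A, and the unit arcs x \<rightarrow> K - {x} for x \<in> K \<inter> A with K - {x} outside the cut.\<close>
definition clique_cut_arcs :: "'a set \<Rightarrow> 'a set set \<Rightarrow> 'a set \<Rightarrow> nat" where
  "clique_cut_arcs A L K = card (K - A) + card {x \<in> K \<inter> A. K - {x} \<notin> L}"

lemma sum_clique_cut_arcs: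
  assumes "0 < h" and fin: "finite V" and AV: "A \<subseteq> V"
  shows "(\<Sum>x\<in>V - A. cdeg V E h x) + (\<Sum>x\<in>A. card {l \<in> Lam V E h - L. insert x l \<in> hcliques V E h})
       = (\<Sum>K\<in>hcliques V E h. clique_cut_arcs A L K)"
proof -
  let ?K = "hcliques V E h"
  have finK: "finite ?K" using fin by (rule finite_hcliques)
  have finA: "finite A" using fin AV finite_subset by blast
  have "(\<Sum>x\<in>V - A. cdeg V E h x) = (\<Sum>K\<in>?K. card {x \<in> V - A. x \<in> K})"
    unfolding cdeg_def using fin finK by (intro sum_multicount_gen) auto
  also have "\<dots> = (\<Sum>K\<in>?K. card (K - A))"
    by (intro sum.cong refl arg_cong[where f = card]) (auto simp: hcliques_def)
  finally have outside: "(\<Sum>x\<in>V - A. cdeg V E h x) = (\<Sum>K\<in>?K. card (K - A))" .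
  have "(\<Sum>x\<in>A. card {l \<in> Lam V E h - L. insert x l \<in> ?K})
      = (\<Sum>x\<in>A. card {K \<in> ?K. x \<in> K \<and> K - {x} \<notin> L})"
    by (intro sum.cong refl card_Lam_extensions[OF \<open>0 < h\<close>])
  also have "\<dots> = (\<Sum>K\<in>?K. card {x \<in> A. x \<in> K \<and> K - {x} \<notin> L})"
    using finA finK by (intro sum_multicount_gen) auto
  also have "\<dots> = (\<Sum>K\<in>?K. card {x \<in> K \<inter> A. K - {x} \<notin> L})"
    by (intro sum.cong refl arg_cong[where f = card]) auto
  finally show ?thesis
    using outside by (simp add: clique_cut_arcs_def sum.distrib)
qed

lemma clique_cut_arcs_le:
  assumes "0 < h" and K: "K \<in> hcliques V E h"
  shows "clique_cut_arcs A L K \<le> h"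
proof -
  have "finite K" using finite_hclique[OF assms] .
  then have "card {x \<in> K \<inter> A. K - {x} \<notin> L} \<le> card (K \<inter> A)"
    by (intro card_mono) auto
  moreover have "card (K \<inter> A) + card (K - A) = h"
    by (rule card_Int_add_card_Diff_hclique[OF assms])
  ultimately show ?thesis by (simp add: clique_cut_arcs_def)
qed

lemma clique_cut_arcs_eq_if_not_subset:
  assumes "0 < h" and K: "K \<in> hcliques V E h"
    and "\<not> K \<subseteq> A" and L_closed: "\<forall>l\<in>L. l \<subseteq> A"
  shows "clique_cut_arcs A L K = h"
proof -
  obtain y where y: "y \<in> K" "y \<notin> A" using \<open>\<not> K \<subseteq> A\<close> by blast
  have "K - {x} \<notin> L" if "x \<in> A" for x
  proof
    assume "K - {x} \<in> L"
    with L_closed have "K - {x} \<subseteq> A" by (rule bspec)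
    moreover have "y \<in> K - {x}" using y that by auto
    ultimately show False using y by blast
  qed
  then have "{x \<in> K \<inter> A. K - {x} \<notin> L} = K \<inter> A" by auto
  moreover have "card (K \<inter> A) + card (K - A) = h"
    by (rule card_Int_add_card_Diff_hclique[OF assms(1,2)])
  ultimately show ?thesis by (simp add: clique_cut_arcs_def)
qed

lemma clique_cut_arcs_eq_0_if_subset:
  assumes "0 < h" and K: "K \<in> hcliques V E h" and "K \<subseteq> A"
  shows "clique_cut_arcs A {l \<in> Lam V E h. l \<subseteq> A} K = 0"
proof -
  have "{x \<in> K \<inter> A. K - {x} \<notin> {l \<in> Lam V E h. l \<subseteq> A}} = {}"
    using \<open>K \<subseteq> A\<close> Diff_singleton_in_Lam[OF assms(1,2)] by blast
  moreover have "K - A = {}" using \<open>K \<subseteq> A\<close> by blast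
  ultimately show ?thesis unfolding clique_cut_arcs_def by (simp only: card.empty add_0)
qed

lemma mu_eq_sum_subset: "finite V \<Longrightarrow> mu V E h A = (\<Sum>K\<in>hcliques V E h. if K \<subseteq> A then 1 else 0)"
  by (simp add: mu_def sum.inter_filter[symmetric] finite_hcliques)

lemma mult_card_hcliques_split:
  assumes "finite V"
  shows "h * card (hcliques V E h) = (\<Sum>K\<in>hcliques V E h. if K \<subseteq> A then 0 else h) + h * mu V E h A"
proof -
  have "(\<Sum>K\<in>hcliques V E h. if K \<subseteq> A then 0 else h) + h * mu V E h A
      = (\<Sum>K\<in>hcliques V E h. (if K \<subseteq> A then 0 else h) + h * (if K \<subseteq> A then 1 else 0))"
    by (simp add: mu_eq_sum_subset[OF assms] sum.distrib sum_distrib_left)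
  also have "\<dots> = (\<Sum>K\<in>hcliques V E h. h)" by (intro sum.cong) auto
  finally show ?thesis by simp
qed

lemma mu_le_card_mult_rho_star:
  assumes "0 < h" and fin: "finite V" and AV: "A \<subseteq> V"
  shows "real (mu V E h A) \<le> real (card A) * rho_star V E h"
proof (cases "A = {}")
  case True
  then show ?thesis
    using assms by (auto simp: mu_def hcliques_def)
next
  case False
  have "finite {rho V E h W | W. W \<subseteq> V \<and> W \<noteq> {}}"
    using fin by simp
  then have "rho V E h A \<le> rho_star V E h"
    unfolding rho_star_def using AV False by (intro Max_ge) auto
  moreover have "0 < real (card A)"
    using False fin AV finite_subset by (auto simp: card_gt_0_iff)
  ultimately show ?thesis by (simp add: rho_def pos_divide_le_eq mult.commute)
qed

lemma cut_cap_cut_nodes: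
  assumes "0 < h" and fin: "finite V" and AV: "A \<subseteq> V" and LL: "L \<subseteq> Lam V E h"
  shows "cut_cap V E h (cut_nodes A L)
       = real (\<Sum>K\<in>hcliques V E h. clique_cut_arcs A L K) + real h * rho_star V E h * real (card A)"
  using cut_cap_cut_nodes_eq_sum_arcs[OF fin AV LL] sum_clique_cut_arcs[OF assms(1-3), of E L, symmetric]
  by (simp only: of_nat_add of_nat_sum)

lemma cut_cap_lower_bound:
  assumes "0 < h" and fin: "finite V" and AV: "A \<subseteq> V" and LL: "L \<subseteq> Lam V E h"
    and L_closed: "\<forall>l\<in>L. l \<subseteq> A"
  shows "real h * real (card (hcliques V E h)) \<le> cut_cap V E h (cut_nodes A L)"
proof -
  let ?K = "hcliques V E h"
  have "(\<Sum>K\<in>?K. if K \<subseteq> A then 0 else h) \<le> (\<Sum>K\<in>?K. clique_cut_arcs A L K)"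
    using clique_cut_arcs_eq_if_not_subset[OF \<open>0 < h\<close> _ _ L_closed] by (intro sum_mono) auto
  then have "h * card ?K \<le> (\<Sum>K\<in>?K. clique_cut_arcs A L K) + h * mu V E h A"
    unfolding mult_card_hcliques_split[OF fin, of h E A] by simp
  then have "real h * real (card ?K) \<le> real (\<Sum>K\<in>?K. clique_cut_arcs A L K) + real h * real (mu V E h A)"
    by (simp only: of_nat_add[symmetric] of_nat_mult[symmetric] of_nat_le_iff)
  also have "\<dots> \<le> real (\<Sum>K\<in>?K. clique_cut_arcs A L K) + real h * rho_star V E h * real (card A)"
    using mult_left_mono[OF mu_le_card_mult_rho_star[OF \<open>0 < h\<close> fin AV], of "real h" E]
    by (simp add: algebra_simps)
  also have "\<dots> = cut_cap V E h (cut_nodes A L)"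
    by (rule cut_cap_cut_nodes[OF \<open>0 < h\<close> fin AV LL, symmetric])
  finally show ?thesis .
qed

lemma cut_cap_densest_le:
  assumes "0 < h" and fin: "finite V" and AV: "A \<subseteq> V"
    and dense: "real (mu V E h A) = real (card A) * rho_star V E h"
  shows "cut_cap V E h (cut_nodes A {l \<in> Lam V E h. l \<subseteq> A}) \<le> real h * real (card (hcliques V E h))"
proof -
  let ?K = "hcliques V E h" and ?L = "{l \<in> Lam V E h. l \<subseteq> A}"
  have "(\<Sum>K\<in>?K. clique_cut_arcs A ?L K) \<le> (\<Sum>K\<in>?K. if K \<subseteq> A then 0 else h)"
  proof (intro sum_mono)
    fix K assume K: "K \<in> ?K"
    show "clique_cut_arcs A ?L K \<le> (if K \<subseteq> A then 0 else h)"
      using clique_cut_arcs_eq_0_if_subset[OF \<open>0 < h\<close> K] clique_cut_arcs_le[OF \<open>0 < h\<close> K] by simp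
  qed
  then have "(\<Sum>K\<in>?K. clique_cut_arcs A ?L K) + h * mu V E h A \<le> h * card ?K"
    unfolding mult_card_hcliques_split[OF fin, of h E A] by simp
  then have "real (\<Sum>K\<in>?K. clique_cut_arcs A ?L K) + real h * real (mu V E h A) \<le> real h * real (card ?K)"
    by (simp only: of_nat_add[symmetric] of_nat_mult[symmetric] of_nat_le_iff)
  moreover have "cut_cap V E h (cut_nodes A ?L)
      = real (\<Sum>K\<in>?K. clique_cut_arcs A ?L K) + real h * real (mu V E h A)"
    unfolding cut_cap_cut_nodes[OF \<open>0 < h\<close> fin AV, of ?L E, OF Collect_restrict] dense
    by (simp only: mult_ac)
  ultimately show ?thesis by (simp only:)
qed

section \<open>Densest subsets span minimum cuts\<close>

lemma max_flow_value_lower_bound: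
  assumes "0 < h" and fin: "finite V" and max: "is_max_flowH V E h f"
  shows "real h * real (card (hcliques V E h)) \<le> flow_value V E h f"
proof -
  let ?N = "nodesH V E h" and ?r = "residH V E h f"
  have fl: "is_flowH V E h f" using max by (simp add: is_max_flowH_def)
  define R where "R = {y \<in> ?N. (Src, y) \<in> ?r\<^sup>*}"
  have "?r `` R \<subseteq> R"
    using residH_subset_nodesH[of V E h f] by (auto simp: R_def intro: rtrancl_into_rtrancl)
  then have R: "R \<subseteq> ?N" "Src \<in> R" "Snk \<notin> R" "?r `` R \<subseteq> R"
    using max_flow_no_augmenting_path[OF fin max] by (auto simp: R_def nodesH_def)
  then obtain A L where "A \<subseteq> V" "L \<subseteq> Lam V E h" "\<forall>l\<in>L. l \<subseteq> A" "R = cut_nodes A L"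
    using residual_closed_cut_eq_cut_nodes[OF fl] by metis
  then show ?thesis
    using flow_value_eq_cut_cap_if_residual_closed[OF fl fin R] cut_cap_lower_bound[OF assms(1,2)]
    by simp
qed

lemma scc_subset_if_residual_closed:
  assumes "is_sccH V E h f C" and closed: "residH V E h f `` T \<subseteq> T" and "C \<inter> T \<noteq> {}"
  shows "C \<subseteq> T"
proof
  let ?r = "residH V E h f"
  obtain x where C: "C = {y \<in> nodesH V E h. (x, y) \<in> ?r\<^sup>* \<and> (y, x) \<in> ?r\<^sup>*}"
    using assms(1) by (auto simp: is_sccH_def)
  obtain y where "y \<in> C" "y \<in> T" using assms(3) by blast
  fix z assume "z \<in> C"
  with \<open>y \<in> C\<close> C have "(y, z) \<in> ?r\<^sup>*" by auto
  with \<open>y \<in> T\<close> have "z \<in> ?r\<^sup>* `` T" by blast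
  then show "z \<in> T" using Image_closed_trancl[OF closed] by simp
qed

theorem claim1:
  fixes V :: "'a set" and E :: "'a set set" and h :: nat
    and f :: "'a hnode \<Rightarrow> 'a hnode \<Rightarrow> real"
    and V1 :: "'a set" and C :: "'a hnode set"
  assumes finV: "finite V"
    and simple: "\<forall>e\<in>E. \<exists>u v. e = {u, v} \<and> u \<noteq> v \<and> u \<in> V \<and> v \<in> V"
    and h2: "h \<ge> 2"
    and maxflow: "is_max_flowH V E h f"
    and V1sub: "V1 \<subseteq> V" and V1ne: "V1 \<noteq> {}"
    and V1dens: "rho V E h V1 = rho_star V E h"
    and scc: "is_sccH V E h f C"
    and nontriv: "Src \<notin> C" "Snk \<notin> C"
  shows "C \<subseteq> VN ` V1 \<union> LN ` {l \<in> Lam V E h. l \<subseteq> V1}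
         \<or> C \<inter> (VN ` V1 \<union> LN ` {l \<in> Lam V E h. l \<subseteq> V1}) = {}"
proof -
  let ?N = "nodesH V E h" and ?r = "residH V E h f" and ?\<Lambda>1 = "{l \<in> Lam V E h. l \<subseteq> V1}"
  have fl: "is_flowH V E h f" and "0 < h" using maxflow h2 by (auto simp: is_max_flowH_def)
  define S where "S = cut_nodes V1 ?\<Lambda>1"
  have S: "S \<subseteq> ?N" "Src \<in> S" "Snk \<notin> S"
    using V1sub by (auto simp: S_def cut_nodes_def nodesH_def)
  have dense: "real (mu V E h V1) = real (card V1) * rho_star V E h"
    using V1dens V1ne finite_subset[OF V1sub finV] by (simp add: rho_def field_simps)
  have "cut_cap V E h S \<le> flow_value V E h f"
    unfolding S_def using cut_cap_densest_le[OF \<open>0 < h\<close> finV V1sub dense]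
      max_flow_value_lower_bound[OF \<open>0 < h\<close> finV maxflow] by (rule order_trans)
  moreover have "\<forall>u\<in>S. \<forall>v\<in>?N - S. capH V E h u v \<noteq> \<infinity>"
    unfolding S_def by (rule capH_leaving_cut_nodes_finite) simp
  ultimately have "?r `` S \<subseteq> S"
    using residual_closed_if_cut_cap_le_flow_value[OF fl finV S] by blast
  then have "C \<subseteq> S" if "C \<inter> S \<noteq> {}" using scc_subset_if_residual_closed[OF scc] that by blast
  then show ?thesis using nontriv by (auto simp: S_def cut_nodes_def)
qed

end
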